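(* Let $R$ be a topological ring and $M$ a locally compact left topological $R$-module which is of Lie type. Then $M$ has the no small submodules property.
   Context: All topological groups are Hausdorff; rings are unital. $R_R$ denotes $R$ as a right topological module over itself; its Pontryagin dual $\widehat{R_R}$ (continuous homomorphisms $R\to\mathbb{S}^1$, compact-open topology) is a left $R$-module via $(r\chi)(x)=\chi(xr)$. Two topological $R$-modules $M,M'$ are locally isomorphic if there are open neighbourhoods $U\subset M$, $V\subset M'$ of $0$ and a homeomorphism $f:U\to V$ such that $f(x+y)=f(x)+f(y)$ whenever $x,y,x+y\in U$, $f(-x)=-f(x)$ whenever $x,-x\in U$, and $f(rx)=rf(x)$ whenever $x\in U$, $r\in R$, $rx\in U$. $M$ is of Lie type if it is locally isomorphic to $\widehat{R_R}^n$ for some $n\ge 0$. $M$ has the no small submodules property if some neighbourhood of $0$ contains no nonzero submodule. *)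

theory Defs
  imports "HOL-Analysis.Analysis"
begin

text \<open>A topological ring is modelled by a type of class
  ring_1 + t2_space + topological_group_add + topological_semigroup_mult
  (unital ring, Hausdorff, continuous addition, negation and multiplication).\<close>

definition left_module :: "('r::ring_1 \<Rightarrow> 'm::ab_group_add \<Rightarrow> 'm) \<Rightarrow> bool" where
  "left_module smul \<longleftrightarrow>
     (\<forall>r x y. smul r (x + y) = smul r x + smul r y) \<and>
     (\<forall>r s x. smul (r + s) x = smul r x + smul s x) \<and>
     (\<forall>r s x. smul (r * s) x = smul r (smul s x)) \<and>
     (\<forall>x. smul 1 x = x)"

definition topological_left_module ::
  "('r::{ring_1,topological_space} \<Rightarrow> 'm::{ab_group_add,topological_space} \<Rightarrow> 'm) \<Rightarrow> bool" where
  "topological_left_module smul \<longleftrightarrow>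
     left_module smul \<and> continuous_on UNIV (\<lambda>p::'r \<times> 'm. smul (fst p) (snd p))"

definition submodule :: "('r \<Rightarrow> 'm::ab_group_add \<Rightarrow> 'm) \<Rightarrow> 'm set \<Rightarrow> bool" where
  "submodule smul N \<longleftrightarrow> 0 \<in> N \<and> (\<forall>x\<in>N. \<forall>y\<in>N. x + y \<in> N) \<and> (\<forall>x\<in>N. - x \<in> N)
     \<and> (\<forall>r. \<forall>x\<in>N. smul r x \<in> N)"

definition no_small_submodules :: "('r \<Rightarrow> 'm::{ab_group_add,topological_space} \<Rightarrow> 'm) \<Rightarrow> bool" where
  "no_small_submodules smul \<longleftrightarrow>
     (\<exists>W. (\<exists>T. open T \<and> 0 \<in> T \<and> T \<subseteq> W) \<and>
          (\<forall>N. submodule smul N \<and> N \<subseteq> W \<longrightarrow> N = {0}))"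

text \<open>Pontryagin dual of R_R: continuous homomorphisms (R,+) \<rightarrow> S^1, where S^1 is the
  unit circle in the complex plane (written multiplicatively), with the compact-open topology.\<close>
definition characters :: "('r::{ring_1,topological_space} \<Rightarrow> complex) set" where
  "characters = {\<gamma>. continuous_on UNIV \<gamma> \<and> (\<forall>x. cmod (\<gamma> x) = 1)
                     \<and> (\<forall>x y. \<gamma> (x + y) = \<gamma> x * \<gamma> y)}"

definition compact_open_dual :: "('r::{ring_1,topological_space} \<Rightarrow> complex) topology" where
  "compact_open_dual = topology_generated_by
     {{\<gamma> \<in> characters. \<gamma> ` K \<subseteq> W} | K W. compact K \<and> open W}"

definition dual_pow :: "nat \<Rightarrow> (nat \<Rightarrow> 'r::{ring_1,topological_space} \<Rightarrow> complex) topology" where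
  "dual_pow n = product_topology (\<lambda>_. compact_open_dual) {..<n}"

definition dual_zero :: "nat \<Rightarrow> nat \<Rightarrow> 'r::ring_1 \<Rightarrow> complex" where
  "dual_zero n = (\<lambda>i\<in>{..<n}. \<lambda>x. 1)"

definition dual_add :: "nat \<Rightarrow> (nat \<Rightarrow> 'r::ring_1 \<Rightarrow> complex) \<Rightarrow> (nat \<Rightarrow> 'r \<Rightarrow> complex)
    \<Rightarrow> nat \<Rightarrow> 'r \<Rightarrow> complex" where
  "dual_add n \<phi> \<psi> = (\<lambda>i\<in>{..<n}. \<lambda>x. \<phi> i x * \<psi> i x)"

definition dual_neg :: "nat \<Rightarrow> (nat \<Rightarrow> 'r::ring_1 \<Rightarrow> complex) \<Rightarrow> nat \<Rightarrow> 'r \<Rightarrow> complex" where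
  "dual_neg n \<phi> = (\<lambda>i\<in>{..<n}. \<lambda>x. inverse (\<phi> i x))"

definition dual_smul :: "nat \<Rightarrow> 'r::ring_1 \<Rightarrow> (nat \<Rightarrow> 'r \<Rightarrow> complex) \<Rightarrow> nat \<Rightarrow> 'r \<Rightarrow> complex" where
  "dual_smul n r \<phi> = (\<lambda>i\<in>{..<n}. \<lambda>x. \<phi> i (x * r))"

definition locally_isomorphic_dual_pow ::
  "('r::{ring_1,topological_space} \<Rightarrow> 'm::{ab_group_add,topological_space} \<Rightarrow> 'm) \<Rightarrow> nat \<Rightarrow> bool" where
  "locally_isomorphic_dual_pow smul n \<longleftrightarrow>
     (\<exists>U V f. open U \<and> 0 \<in> U \<and> openin (dual_pow n) V \<and> dual_zero n \<in> V \<and>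
        homeomorphic_map (subtopology euclidean U) (subtopology (dual_pow n) V) f \<and>
        (\<forall>x y. x \<in> U \<and> y \<in> U \<and> x + y \<in> U \<longrightarrow> f (x + y) = dual_add n (f x) (f y)) \<and>
        (\<forall>x. x \<in> U \<and> - x \<in> U \<longrightarrow> f (- x) = dual_neg n (f x)) \<and>
        (\<forall>r x. x \<in> U \<and> smul r x \<in> U \<longrightarrow> f (smul r x) = dual_smul n r (f x)))"

definition lie_type ::
  "('r::{ring_1,topological_space} \<Rightarrow> 'm::{ab_group_add,topological_space} \<Rightarrow> 'm) \<Rightarrow> bool" where
  "lie_type smul \<longleftrightarrow> (\<exists>n. locally_isomorphic_dual_pow smul n)"

end

theory Submission
  imports Defs
begin

text \<open>The circle has no small subgroups: for a unit complex number z with Re z > 1/2 one has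
  1 - Re (z * z) \<ge> 3 (1 - Re z), so a character of (R,+) with values in the half-plane Re > 1/2
  is trivial, since doubling its argument would otherwise push it out of the half-plane.
  Transport this through the local isomorphism f: the points x near 0 with Re (f x i 1) > 1/2
  for all i form an open neighbourhood T of 0. If a submodule N lies in T and x \<in> N, then
  f x i r = f (r x) i 1 lies in the half-plane for every r, so every f x i is trivial,
  f x = f 0 and x = 0.\<close>

lemma unit_circle_Re_mult_self:
  fixes z :: complex
  assumes "cmod z = 1" "Re z \<ge> 1/2"
  shows "3 * (1 - Re z) \<le> 1 - Re (z * z)"
proof -
  have "(Re z)\<^sup>2 + (Im z)\<^sup>2 = 1"
    using assms(1) cmod_power2[of z] by simp
  then have "1 - Re (z * z) = 2 * (1 - Re z) * (1 + Re z)"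
    by (simp add: algebra_simps power2_eq_square)
  moreover have "1 - Re z \<ge> 0"
    using complex_Re_le_cmod[of z] assms(1) by simp
  ultimately show ?thesis
    using assms(2) mult_left_mono[of "3/2" "1 + Re z" "2 * (1 - Re z)"] by simp
qed

lemma unit_circle_hom_trivial_if_Re_gt_half:
  fixes \<gamma> :: "'a::plus \<Rightarrow> complex"
  assumes unit: "\<And>x. cmod (\<gamma> x) = 1"
    and double: "\<And>x. \<gamma> (x + x) = \<gamma> x * \<gamma> x"
    and half: "\<And>x. Re (\<gamma> x) > 1/2"
  shows "\<gamma> x = 1"
proof -
  have bound: "3 ^ k * (1 - Re (\<gamma> y)) \<le> 1/2" for k :: nat and y
  proof (induction k arbitrary: y)
    case 0
    show ?case using half[of y] by simp
  next
    case (Suc k)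
    have "3 ^ Suc k * (1 - Re (\<gamma> y)) \<le> 3 ^ k * (1 - Re (\<gamma> (y + y)))"
      using unit_circle_Re_mult_self[OF unit, of y] half[of y] double[of y]
      by (simp add: mult_left_mono)
    also have "\<dots> \<le> 1/2" by (rule Suc)
    finally show ?case .
  qed
  have "Re (\<gamma> x) \<le> 1"
    using complex_Re_le_cmod[of "\<gamma> x"] unit[of x] by simp
  moreover have "\<not> Re (\<gamma> x) < 1"
  proof
    assume "Re (\<gamma> x) < 1"
    then obtain k :: nat where "1 / (1 - Re (\<gamma> x)) < 3 ^ k"
      using real_arch_pow[of 3] by force
    with \<open>Re (\<gamma> x) < 1\<close> bound[of k x] show False
      by (simp add: field_simps)
  qed
  ultimately have "Re (\<gamma> x) = 1" by simp
  moreover have "(Re (\<gamma> x))\<^sup>2 + (Im (\<gamma> x))\<^sup>2 = 1"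
    using unit[of x] cmod_power2[of "\<gamma> x"] by simp
  ultimately show ?thesis
    by (simp add: complex_eq_iff)
qed

lemma topspace_compact_open_dual: "topspace compact_open_dual = characters"
proof -
  have "characters \<in> {{\<gamma> \<in> characters. \<gamma> ` K \<subseteq> W} | K W. compact K \<and> open W}"
    by (rule CollectI, rule exI[of _ "{}"], rule exI[of _ UNIV]) simp
  then show ?thesis
    unfolding compact_open_dual_def topology_generated_by_topspace by blast
qed

lemma continuous_map_compact_open_dual_eval:
  "continuous_map compact_open_dual euclidean (\<lambda>\<gamma>. \<gamma> a)"
  unfolding continuous_map_def
proof (intro conjI allI impI)
  fix W :: "complex set"
  assume "openin euclidean W"
  then have "{\<gamma> \<in> characters. \<gamma> ` {a} \<subseteq> W}
      \<in> {{\<gamma> \<in> characters. \<gamma> ` K \<subseteq> W} | K W. compact K \<and> open W}"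
    by (intro CollectI exI[of _ "{a}"] exI[of _ W]) simp
  moreover have "{\<gamma> \<in> topspace compact_open_dual. \<gamma> a \<in> W} = {\<gamma> \<in> characters. \<gamma> ` {a} \<subseteq> W}"
    by (simp add: topspace_compact_open_dual)
  ultimately show "openin compact_open_dual {\<gamma> \<in> topspace compact_open_dual. \<gamma> a \<in> W}"
    unfolding compact_open_dual_def by (simp add: topology_generated_by_Basis)
qed auto

lemma topspace_dual_pow: "topspace (dual_pow n) = PiE {..<n} (\<lambda>_. characters)"
  by (simp add: dual_pow_def topspace_compact_open_dual)

lemma dual_pow_eq_dual_zeroI:
  assumes "\<phi> \<in> topspace (dual_pow n)" and "\<And>i x. i < n \<Longrightarrow> \<phi> i x = 1"
  shows "\<phi> = dual_zero n"
proof
  fix i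
  show "\<phi> i = dual_zero n i"
    using assms PiE_arb[of \<phi> "{..<n}" "\<lambda>_. characters" i]
    by (cases "i < n") (auto simp: topspace_dual_pow dual_zero_def)
qed

lemma dual_zero_in_topspace_dual_pow: "dual_zero n \<in> topspace (dual_pow n)"
  by (simp add: topspace_dual_pow dual_zero_def characters_def)

lemma dual_add_self_eq_imp_dual_zero:
  assumes \<phi>: "\<phi> \<in> topspace (dual_pow n)" and idem: "dual_add n \<phi> \<phi> = \<phi>"
  shows "\<phi> = dual_zero n"
proof (rule dual_pow_eq_dual_zeroI[OF \<phi>])
  fix i x
  assume "i < n"
  then have "\<phi> i x * \<phi> i x = \<phi> i x" and "cmod (\<phi> i x) = 1"
    using fun_cong[OF fun_cong[OF idem, of i], of x] \<phi>
    by (auto simp: dual_add_def topspace_dual_pow characters_def)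
  then show "\<phi> i x = 1"
    by (metis mult_cancel_right2 norm_zero zero_neq_one)
qed

definition dual_half_nbhd :: "nat \<Rightarrow> (nat \<Rightarrow> 'r::{ring_1,topological_space} \<Rightarrow> complex) set" where
  "dual_half_nbhd n = {\<phi> \<in> topspace (dual_pow n). \<forall>i<n. Re (\<phi> i 1) > 1/2}"

lemma openin_dual_half_nbhd: "openin (dual_pow n) (dual_half_nbhd n)"
proof -
  have "openin (dual_pow n) {\<phi> \<in> topspace (dual_pow n). \<phi> i 1 \<in> {z. Re z > 1/2}}" if "i < n" for i
  proof (rule openin_continuous_map_preimage)
    show "continuous_map (dual_pow n) euclidean (\<lambda>\<phi>. \<phi> i 1)"
      using continuous_map_compose[OF continuous_map_product_projection[of i "{..<n}"]
          continuous_map_compact_open_dual_eval[of 1]] that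
      by (simp add: dual_pow_def o_def)
  qed (metis open_halfspace_Re_gt open_openin)
  then have "openin (dual_pow n)
      ((\<Inter>i<n. {\<phi> \<in> topspace (dual_pow n). \<phi> i 1 \<in> {z. Re z > 1/2}}) \<inter> topspace (dual_pow n))"
    by (intro openin_INT) auto
  also have "(\<Inter>i<n. {\<phi> \<in> topspace (dual_pow n). \<phi> i 1 \<in> {z. Re z > 1/2}}) \<inter> topspace (dual_pow n)
      = dual_half_nbhd n"
    unfolding dual_half_nbhd_def by auto
  finally show ?thesis .
qed

lemma dual_zero_in_dual_half_nbhd: "dual_zero n \<in> dual_half_nbhd n"
  using dual_zero_in_topspace_dual_pow by (simp add: dual_half_nbhd_def dual_zero_def)

lemma dual_smul_orbit_in_half_nbhd_imp_zero:
  assumes \<phi>: "\<phi> \<in> topspace (dual_pow n)" and orbit: "\<And>r. dual_smul n r \<phi> \<in> dual_half_nbhd n"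
  shows "\<phi> = dual_zero n"
proof (rule dual_pow_eq_dual_zeroI[OF \<phi>])
  fix i x
  assume "i < n"
  then have "\<phi> i \<in> characters"
    using \<phi> by (auto simp: topspace_dual_pow)
  moreover have "Re (\<phi> i r) > 1/2" for r
    using orbit[of r] \<open>i < n\<close> by (simp add: dual_half_nbhd_def dual_smul_def)
  ultimately show "\<phi> i x = 1"
    by (intro unit_circle_hom_trivial_if_Re_gt_half[where \<gamma> = "\<phi> i"]) (auto simp: characters_def)
qed

lemma locally_isomorphic_dual_powE:
  fixes smul :: "'r::{ring_1,topological_space} \<Rightarrow> 'm::{ab_group_add,topological_space} \<Rightarrow> 'm"
  assumes "locally_isomorphic_dual_pow smul n"
  obtains U f where "open U" "0 \<in> U" "inj_on f U"
    "continuous_map (top_of_set U) (dual_pow n) f" "\<And>x. x \<in> U \<Longrightarrow> f x \<in> topspace (dual_pow n)"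
    "f 0 = dual_zero n" "\<And>r x. x \<in> U \<Longrightarrow> smul r x \<in> U \<Longrightarrow> f (smul r x) = dual_smul n r (f x)"
proof -
  obtain U V f where U: "open U" "0 \<in> U" and V: "openin (dual_pow n) V"
    and hom: "homeomorphic_map (top_of_set U) (subtopology (dual_pow n) V) f"
    and add: "\<And>x y. x \<in> U \<Longrightarrow> y \<in> U \<Longrightarrow> x + y \<in> U \<Longrightarrow> f (x + y) = dual_add n (f x) (f y)"
    and "\<And>r x. x \<in> U \<Longrightarrow> smul r x \<in> U \<Longrightarrow> f (smul r x) = dual_smul n r (f x)"
    using assms unfolding locally_isomorphic_dual_pow_def by metis
  moreover have f_in: "f x \<in> topspace (dual_pow n)" if "x \<in> U" for x
    using homeomorphic_imp_surjective_map[OF hom] openin_subset[OF V] that by auto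
  moreover have "inj_on f U"
    using homeomorphic_imp_injective_map[OF hom] by simp
  moreover have "continuous_map (top_of_set U) (dual_pow n) f"
    using homeomorphic_imp_continuous_map[OF hom] continuous_map_into_fulltopology by blast
  moreover have "f 0 = dual_zero n"
    using dual_add_self_eq_imp_dual_zero[OF f_in[OF U(2)]] add[OF U(2) U(2)] U(2) by simp
  ultimately show ?thesis
    using that by blast
qed

lemma locally_isomorphic_dual_pow_imp_no_small_submodules:
  fixes smul :: "'r::{ring_1,topological_space} \<Rightarrow> 'm::{ab_group_add,topological_space} \<Rightarrow> 'm"
  assumes "locally_isomorphic_dual_pow smul n"
  shows "no_small_submodules smul"
proof -
  obtain U f where U: "open U" "0 \<in> U" and inj: "inj_on f U"
    and cont: "continuous_map (top_of_set U) (dual_pow n) f"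
    and f_in: "\<And>x. x \<in> U \<Longrightarrow> f x \<in> topspace (dual_pow n)" and f0: "f 0 = dual_zero n"
    and scalar: "\<And>r x. x \<in> U \<Longrightarrow> smul r x \<in> U \<Longrightarrow> f (smul r x) = dual_smul n r (f x)"
    using locally_isomorphic_dual_powE[OF assms] by metis
  define T where "T = {x \<in> U. f x \<in> dual_half_nbhd n}"
  have "openin (top_of_set U) T"
    using openin_continuous_map_preimage[OF cont openin_dual_half_nbhd] by (simp add: T_def)
  then have "open T"
    using U(1) openin_open_trans by blast
  moreover have "0 \<in> T"
    using U(2) f0 dual_zero_in_dual_half_nbhd by (simp add: T_def)
  moreover have "N = {0}" if N: "submodule smul N" "N \<subseteq> T" for N
  proof -
    have "x = 0" if "x \<in> N" for x
    proof -
      have "x \<in> U"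
        using \<open>x \<in> N\<close> N(2) by (auto simp: T_def)
      have "dual_smul n r (f x) \<in> dual_half_nbhd n" for r
      proof -
        have "smul r x \<in> T"
          using N \<open>x \<in> N\<close> unfolding submodule_def by blast
        then show ?thesis
          using scalar[OF \<open>x \<in> U\<close>] unfolding T_def by auto
      qed
      then have "f x = f 0"
        using dual_smul_orbit_in_half_nbhd_imp_zero[OF f_in[OF \<open>x \<in> U\<close>]] f0 by simp
      then show "x = 0"
        by (rule inj_onD[OF inj _ \<open>x \<in> U\<close> U(2)])
    qed
    then show ?thesis
      using N(1) unfolding submodule_def by blast
  qed
  ultimately show ?thesis
    unfolding no_small_submodules_def by blast
qed

theorem mainTheorem18:
  fixes smul :: "'r::{ring_1,t2_space,topological_group_add,topological_semigroup_mult}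
                   \<Rightarrow> 'm::{ab_group_add,t2_space,topological_group_add} \<Rightarrow> 'm"
  assumes "topological_left_module smul"
    and "locally_compact_space (euclidean :: 'm topology)"
    and "lie_type smul"
  shows "no_small_submodules smul"
  using assms(3) locally_isomorphic_dual_pow_imp_no_small_submodules
  unfolding lie_type_def by blast

end
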